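(* For every strongly normalisable $\lambda\mu$-term $M$ (i.e. $M\in\mathrm{SN}$) there exist a restricted basis $\Gamma$, a restricted name context $\Delta$ and a restricted term type $\delta$ such that $\Gamma \vdash_{R} M : \delta \mid \Delta$ is derivable in the restricted intersection type system.
   Context: Terms of Parigot's untyped $\lambda\mu$-calculus: $M ::= x \mid \lambda x.M \mid MN \mid \mu\alpha.C$, commands $C ::= [\alpha]M$, with reduction the compatible closure of $(\lambda x.M)N \to M[N/x]$ and $(\mu\alpha.C)N \to \mu\alpha.C[\alpha \Leftarrow N]$ (structural substitution: every subcommand $[\alpha]P$ becomes $[\alpha]P'N$); the renaming rule $[\alpha]\mu\beta.C\to C[\alpha/\beta]$ is ignored here, which does not change the set of strongly normalisable terms. $\mathrm{SN}$ is the set of terms admitting no infinite reduction sequence. Restricted types: with a single type constant $\varphi$, term types $\delta ::= \kappa\to\varphi \mid \delta\wedge\delta$ and continuation types $\kappa ::= \omega \mid \delta\times\kappa \mid \kappa\wedge\kappa$, pre-ordered by the least intersection type theory ($\wedge$ is the meet) with $\kappa\le\omega$, $(\delta_1\times\kappa_1)\wedge(\delta_2\times\kappa_2)\le(\delta_1\wedge\delta_2)\times(\kappa_1\wedge\kappa_2)$, $\times$ covariant in both arguments, and $\kappa_1\to\varphi\le\kappa_2\to\varphi$ whenever $\kappa_2\le\kappa_1$. A restricted basis $\Gamma$ maps finitely many term variables to restricted term types; a restricted name context $\Delta$ maps finitely many names to restricted continuation types ($\Delta(\alpha)=\omega$ if $\alpha$ is not declared). $\Gamma\vdash_R T:\sigma\mid\Delta$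 means derivable, with all judgements restricted and without the rule assigning $\omega$ to arbitrary terms, using the rules: (Ax) $\Gamma,x{:}\delta\vdash x:\delta\mid\Delta$; (Abs) from $\Gamma,x{:}\delta\vdash M:\kappa\to\varphi\mid\Delta$ infer $\Gamma\vdash\lambda x.M:\delta\times\kappa\to\varphi\mid\Delta$; (App) from $\Gamma\vdash M:\delta\times\kappa\to\varphi\mid\Delta$ and $\Gamma\vdash N:\delta\mid\Delta$ infer $\Gamma\vdash MN:\kappa\to\varphi\mid\Delta$; (Cmd) from $\Gamma\vdash M:\delta\mid\Delta$ infer $\Gamma\vdash[\alpha]M:\delta\times\Delta(\alpha)\mid\Delta$; ($\mu$) from $\Gamma\vdash C:(\kappa'\to\varphi)\times\kappa'\mid\alpha{:}\kappa,\Delta$ infer $\Gamma\vdash\mu\alpha.C:\kappa\to\varphi\mid\Delta$; plus intersection introduction ($\wedge$) and subsumption ($\le$). *)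

theory Defs
  imports Main
begin

text \<open>Term variables and names live in two separate de Bruijn index spaces.
  Lam binds term variable 0, Mu binds name 0.  Cmd a M is the command [a]M.\<close>

datatype trm = Var nat | Lam trm | App trm trm | Mu cmd
     and cmd = Cmd nat trm

primrec lift_t :: "nat \<Rightarrow> trm \<Rightarrow> trm" and lift_tc :: "nat \<Rightarrow> cmd \<Rightarrow> cmd" where
  "lift_t k (Var i) = Var (if i < k then i else Suc i)"
| "lift_t k (Lam M) = Lam (lift_t (Suc k) M)"
| "lift_t k (App M N) = App (lift_t k M) (lift_t k N)"
| "lift_t k (Mu C) = Mu (lift_tc k C)"
| "lift_tc k (Cmd a M) = Cmd a (lift_t k M)"

primrec lift_n :: "nat \<Rightarrow> trm \<Rightarrow> trm" and lift_nc :: "nat \<Rightarrow> cmd \<Rightarrow> cmd" where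
  "lift_n k (Var i) = Var i"
| "lift_n k (Lam M) = Lam (lift_n k M)"
| "lift_n k (App M N) = App (lift_n k M) (lift_n k N)"
| "lift_n k (Mu C) = Mu (lift_nc (Suc k) C)"
| "lift_nc k (Cmd a M) = Cmd (if a < k then a else Suc a) (lift_n k M)"

primrec subst :: "trm \<Rightarrow> nat \<Rightarrow> trm \<Rightarrow> trm" and subst_c :: "cmd \<Rightarrow> nat \<Rightarrow> trm \<Rightarrow> cmd" where
  "subst (Var i) k N = (if i < k then Var i else if i = k then N else Var (i - 1))"
| "subst (Lam M) k N = Lam (subst M (Suc k) (lift_t 0 N))"
| "subst (App M P) k N = App (subst M k N) (subst P k N)"
| "subst (Mu C) k N = Mu (subst_c C k (lift_n 0 N))"
| "subst_c (Cmd a M) k N = Cmd a (subst M k N)"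

text \<open>Structural substitution M[k \<Leftarrow> N]: every subcommand [k]P becomes [k](P' N).\<close>
primrec ssubst :: "trm \<Rightarrow> nat \<Rightarrow> trm \<Rightarrow> trm" and ssubst_c :: "cmd \<Rightarrow> nat \<Rightarrow> trm \<Rightarrow> cmd" where
  "ssubst (Var i) k N = Var i"
| "ssubst (Lam M) k N = Lam (ssubst M k (lift_t 0 N))"
| "ssubst (App M P) k N = App (ssubst M k N) (ssubst P k N)"
| "ssubst (Mu C) k N = Mu (ssubst_c C (Suc k) (lift_n 0 N))"
| "ssubst_c (Cmd a M) k N =
     (if a = k then Cmd a (App (ssubst M k N) N) else Cmd a (ssubst M k N))"

inductive red_t :: "trm \<Rightarrow> trm \<Rightarrow> bool" and red_c :: "cmd \<Rightarrow> cmd \<Rightarrow> bool" where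
  beta: "red_t (App (Lam M) N) (subst M 0 N)"
| mu: "red_t (App (Mu C) N) (Mu (ssubst_c C 0 (lift_n 0 N)))"
| lam: "red_t M M' \<Longrightarrow> red_t (Lam M) (Lam M')"
| appL: "red_t M M' \<Longrightarrow> red_t (App M N) (App M' N)"
| appR: "red_t N N' \<Longrightarrow> red_t (App M N) (App M N')"
| muC: "red_c C C' \<Longrightarrow> red_t (Mu C) (Mu C')"
| cmd: "red_t M M' \<Longrightarrow> red_c (Cmd a M) (Cmd a M')"

definition SN :: "trm \<Rightarrow> bool" where
  "SN M \<longleftrightarrow> \<not> (\<exists>f. f 0 = M \<and> (\<forall>i. red_t (f i) (f (Suc i))))"

text \<open>Term types  \<delta> ::= \<kappa>\<rightarrow>\<phi> | \<delta>\<and>\<delta>;  continuation types \<kappa> ::= \<omega> | \<delta>\<times>\<kappa> | \<kappa>\<and>\<kappa>.\<close>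
datatype ttype = TArr ctype | TInt ttype ttype
     and ctype = Omega | Prod ttype ctype | CInt ctype ctype

inductive sub_t :: "ttype \<Rightarrow> ttype \<Rightarrow> bool" and sub_c :: "ctype \<Rightarrow> ctype \<Rightarrow> bool" where
  t_refl: "sub_t d d"
| t_trans: "sub_t d1 d2 \<Longrightarrow> sub_t d2 d3 \<Longrightarrow> sub_t d1 d3"
| t_inter1: "sub_t (TInt d1 d2) d1"
| t_inter2: "sub_t (TInt d1 d2) d2"
| t_glb: "sub_t d d1 \<Longrightarrow> sub_t d d2 \<Longrightarrow> sub_t d (TInt d1 d2)"
| t_arr: "sub_c k2 k1 \<Longrightarrow> sub_t (TArr k1) (TArr k2)"
| c_refl: "sub_c k k"
| c_trans: "sub_c k1 k2 \<Longrightarrow> sub_c k2 k3 \<Longrightarrow> sub_c k1 k3"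
| c_inter1: "sub_c (CInt k1 k2) k1"
| c_inter2: "sub_c (CInt k1 k2) k2"
| c_glb: "sub_c k k1 \<Longrightarrow> sub_c k k2 \<Longrightarrow> sub_c k (CInt k1 k2)"
| c_omega: "sub_c k Omega"
| c_prod_dist: "sub_c (CInt (Prod d1 k1) (Prod d2 k2)) (Prod (TInt d1 d2) (CInt k1 k2))"
| c_prod: "sub_t d1 d2 \<Longrightarrow> sub_c k1 k2 \<Longrightarrow> sub_c (Prod d1 k1) (Prod d2 k2)"

type_synonym basis = "nat \<rightharpoonup> ttype"
type_synonym namectx = "nat \<rightharpoonup> ctype"

definition dget :: "namectx \<Rightarrow> nat \<Rightarrow> ctype" where
  "dget D a = (case D a of None \<Rightarrow> Omega | Some k \<Rightarrow> k)"

definition cons_ctx :: "'a \<Rightarrow> (nat \<rightharpoonup> 'a) \<Rightarrow> (nat \<rightharpoonup> 'a)" where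
  "cons_ctx x G = (\<lambda>n. case n of 0 \<Rightarrow> Some x | Suc m \<Rightarrow> G m)"

inductive typ_t :: "basis \<Rightarrow> trm \<Rightarrow> ttype \<Rightarrow> namectx \<Rightarrow> bool"
      and typ_c :: "basis \<Rightarrow> cmd \<Rightarrow> ctype \<Rightarrow> namectx \<Rightarrow> bool" where
  Ax: "G x = Some d \<Longrightarrow> typ_t G (Var x) d D"
| Abs: "typ_t (cons_ctx d G) M (TArr k) D \<Longrightarrow> typ_t G (Lam M) (TArr (Prod d k)) D"
| App: "typ_t G M (TArr (Prod d k)) D \<Longrightarrow> typ_t G N d D \<Longrightarrow> typ_t G (App M N) (TArr k) D"
| CmdR: "typ_t G M d D \<Longrightarrow> typ_c G (Cmd a M) (Prod d (dget D a)) D"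
| MuR: "typ_c G C (Prod (TArr k') k') (cons_ctx k D) \<Longrightarrow> typ_t G (Mu C) (TArr k) D"
| IntT: "typ_t G M d1 D \<Longrightarrow> typ_t G M d2 D \<Longrightarrow> typ_t G M (TInt d1 d2) D"
| IntC: "typ_c G C k1 D \<Longrightarrow> typ_c G C k2 D \<Longrightarrow> typ_c G C (CInt k1 k2) D"
| SubT: "typ_t G M d D \<Longrightarrow> sub_t d d' \<Longrightarrow> typ_t G M d' D"
| SubC: "typ_c G C k D \<Longrightarrow> sub_c k k' \<Longrightarrow> typ_c G C k' D"

end

theory Submission
  imports Defs
begin

text \<open>Strongly normalising terms are typed by well-founded induction along reduction and the
  subterm relation, which is well-founded on \<open>SN\<close> because reductions of subterms lift to the whole
  term. Write the term as \<open>h P\<^sub>1 \<dots> P\<^sub>n\<close> with \<open>h\<close> a variable, an abstraction or a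
  \<open>\<mu>\<close>-abstraction. If \<open>h\<close> is a variable or \<open>n = 0\<close>, a typing is assembled from typings of
  the immediate subterms, merged by intersecting bases and name contexts. Otherwise the head
  redex \<open>h P\<^sub>1\<close> is contracted, and the typing of the contractum is transported back to the
  redex (subject expansion): the argument is given the intersection of all the types it receives
  in the contractum, together with one type of its own in case it was erased. Everything is done
  in a syntax-directed variant of the system, which is sound for \<open>\<turnstile>\<^sub>R\<close>.\<close>

lemma cons_ctx_0 [simp]: "cons_ctx x G 0 = Some x"
  and cons_ctx_Suc [simp]: "cons_ctx x G (Suc n) = G n"
  by (simp_all add: cons_ctx_def)

lemma dget_cons_ctx: "dget (cons_ctx k D) = case_nat k (dget D)"
  by (rule ext) (simp add: dget_def cons_ctx_def split: nat.split)

section \<open>A syntax-directed type system\<close>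

text \<open>Subsumption is confined to variables and to the \<open>\<mu>\<close>-rule (which also types the
  command), intersections are introduced only at the root, and name contexts are total with
  \<open>Omega\<close> for undeclared names.\<close>

inductive sd_typ :: "basis \<Rightarrow> trm \<Rightarrow> ttype \<Rightarrow> (nat \<Rightarrow> ctype) \<Rightarrow> bool" where
  sd_Var: "G x = Some s \<Longrightarrow> sub_t s (TArr k) \<Longrightarrow> sd_typ G (Var x) (TArr k) D"
| sd_Abs: "sd_typ (cons_ctx s G) M (TArr k) D \<Longrightarrow> sd_typ G (Lam M) (TArr (Prod s k)) D"
| sd_App: "sd_typ G M (TArr (Prod s k)) D \<Longrightarrow> sd_typ G N s D \<Longrightarrow> sd_typ G (App M N) (TArr k) D"
| sd_Mu: "sd_typ G M (TArr k') (case_nat k D) \<Longrightarrow> sub_c (case_nat k D a) k' \<Longrightarrow>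
    sd_typ G (Mu (Cmd a M)) (TArr k) D"
| sd_Int: "sd_typ G M t1 D \<Longrightarrow> sd_typ G M t2 D \<Longrightarrow> sd_typ G M (TInt t1 t2) D"

inductive_cases sd_typ_IntE: "sd_typ G M (TInt t1 t2) D"
inductive_cases sd_typ_LamE: "sd_typ G (Lam M) (TArr k) D"
inductive_cases sd_typ_AppE: "sd_typ G (App M N) (TArr k) D"
inductive_cases sd_typ_MuE: "sd_typ G (Mu C) (TArr k) D"

lemma sd_typ_Int_iff: "sd_typ G M (TInt t1 t2) D \<longleftrightarrow> sd_typ G M t1 D \<and> sd_typ G M t2 D"
  by (auto elim: sd_typ_IntE intro: sd_Int)

lemma sd_typ_from_arrows:
  assumes "sd_typ G M t D"
    and "\<And>k. sd_typ G M (TArr k) D \<Longrightarrow> Q (TArr k)"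
    and "\<And>t1 t2. Q t1 \<Longrightarrow> Q t2 \<Longrightarrow> Q (TInt t1 t2)"
  shows "Q t"
  using assms(1) by (induction t) (auto simp: sd_typ_Int_iff intro: assms(2,3))

lemma sd_typ_arrow: "sd_typ G M t D \<Longrightarrow> \<exists>k. sd_typ G M (TArr k) D"
  by (induction t) (auto simp: sd_typ_Int_iff)

lemma sd_typ_Var_iff: "sd_typ G (Var x) t D \<longleftrightarrow> (\<exists>s. G x = Some s \<and> sub_t s t)"
proof
  show "sd_typ G (Var x) t D \<Longrightarrow> \<exists>s. G x = Some s \<and> sub_t s t"
    by (induction G "Var x" t D rule: sd_typ.induct) (auto intro: t_glb)
  show "\<exists>s. G x = Some s \<and> sub_t s t \<Longrightarrow> sd_typ G (Var x) t D"
    by (induction t) (auto intro: sd_Var, meson sd_Int t_inter1 t_inter2 t_trans)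
qed

lemma sd_typ_sound:
  "sd_typ G M t D' \<Longrightarrow> (\<And>a. sub_c (dget D a) (D' a)) \<Longrightarrow> typ_t G M t D"
proof (induction arbitrary: D rule: sd_typ.induct)
  case (sd_Var G x s k D')
  then show ?case by (blast intro: Ax SubT)
next
  case (sd_Abs s G M k D')
  then show ?case by (simp add: Abs)
next
  case (sd_App G M s k D' N)
  then show ?case by (blast intro: App)
next
  case (sd_Mu G M k' k D' a)
  have "sub_c (dget (cons_ctx k D) b) (case_nat k D' b)" for b
    using sd_Mu.prems by (cases b) (simp_all add: dget_cons_ctx c_refl)
  then have body: "typ_t G M (TArr k') (cons_ctx k D)" and "sub_c (dget (cons_ctx k D) a) k'"
    using sd_Mu.IH sd_Mu.hyps(2) c_trans by blast+
  then have "sub_c (Prod (TArr k') (dget (cons_ctx k D) a)) (Prod (TArr k') k')"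
    by (simp add: c_prod t_refl)
  with CmdR[OF body] show ?case
    by (blast intro: MuR SubC)
next
  case (sd_Int G M t1 D' t2)
  then show ?case by (simp add: IntT)
qed

definition basis_le :: "basis \<Rightarrow> basis \<Rightarrow> bool" where
  "basis_le G' G \<longleftrightarrow> (\<forall>x s. G x = Some s \<longrightarrow> (\<exists>s'. G' x = Some s' \<and> sub_t s' s))"

lemma basis_le_refl: "basis_le G G"
  unfolding basis_le_def by (auto intro: t_refl)

lemma basis_le_cons_ctx: "basis_le G' G \<Longrightarrow> basis_le (cons_ctx s G') (cons_ctx s G)"
  unfolding basis_le_def by (auto simp: cons_ctx_def split: nat.split intro: t_refl)

lemma sd_typ_mono:
  "sd_typ G M t D \<Longrightarrow> basis_le G' G \<Longrightarrow> (\<And>a. sub_c (D' a) (D a)) \<Longrightarrow> sd_typ G' M t D'"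
proof (induction arbitrary: G' D' rule: sd_typ.induct)
  case (sd_Var G x s k D)
  then show ?case unfolding basis_le_def by (meson sd_typ.sd_Var t_trans)
next
  case (sd_Abs s G M k D)
  then show ?case by (meson basis_le_cons_ctx sd_typ.sd_Abs)
next
  case (sd_App G M s k D N)
  then show ?case by (meson sd_typ.sd_App)
next
  case (sd_Mu G M k' k D a)
  have "sub_c (case_nat k D' b) (case_nat k D b)" for b
    using sd_Mu.prems(2) by (cases b) (simp_all add: c_refl)
  then show ?case using sd_Mu by (meson sd_typ.sd_Mu c_trans)
next
  case (sd_Int G M t1 D t2)
  then show ?case by (meson sd_typ.sd_Int)
qed

definition lift_idx :: "nat \<Rightarrow> nat \<Rightarrow> nat" where
  "lift_idx k n = (if n < k then n else Suc n)"

lemma cons_ctx_comp_lift_idx: "cons_ctx s G \<circ> lift_idx (Suc k) = cons_ctx s (G \<circ> lift_idx k)"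
  by (rule ext) (simp add: lift_idx_def cons_ctx_def split: nat.split)

lemma case_nat_comp_lift_idx: "case_nat s D \<circ> lift_idx (Suc k) = case_nat s (D \<circ> lift_idx k)"
  by (rule ext) (simp add: lift_idx_def split: nat.split)

lemma sd_typ_lift_tD: "sd_typ G (lift_t k N) t D \<Longrightarrow> sd_typ (G \<circ> lift_idx k) N t D"
proof (induction G "lift_t k N" t D arbitrary: k N rule: sd_typ.induct)
  case (sd_Var G x s k' D)
  then show ?case by (cases N) (auto simp: lift_idx_def intro: sd_typ.sd_Var)
next
  case (sd_Abs s G M k' D)
  then show ?case by (cases N) (auto simp flip: cons_ctx_comp_lift_idx intro: sd_typ.sd_Abs)
next
  case (sd_App G M s k' D P)
  then show ?case by (cases N; simp) (metis sd_typ.sd_App)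
next
  case (sd_Mu G M k' k'' D a)
  then obtain N1 where "N = Mu (Cmd a N1)" "M = lift_t k N1"
    by (cases N; simp) (metis cmd.exhaust cmd.inject lift_tc.simps)
  with sd_Mu show ?case by (auto intro: sd_typ.sd_Mu)
next
  case (sd_Int G M t1 D t2)
  then show ?case by (auto intro: sd_typ.sd_Int)
qed

lemma sd_typ_lift_nD: "sd_typ G (lift_n k N) t D \<Longrightarrow> sd_typ G N t (D \<circ> lift_idx k)"
proof (induction G "lift_n k N" t D arbitrary: k N rule: sd_typ.induct)
  case (sd_Var G x s k' D)
  then show ?case by (cases N) (auto intro: sd_typ.sd_Var)
next
  case (sd_Abs s G M k' D)
  then show ?case by (cases N) (auto intro: sd_typ.sd_Abs)
next
  case (sd_App G M s k' D P)
  then show ?case by (cases N; simp) (metis sd_typ.sd_App)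
next
  case (sd_Mu G M k' k'' D a)
  obtain C where "N = Mu C" using sd_Mu.hyps(4) by (cases N) auto
  moreover obtain a0 N1 where "C = Cmd a0 N1" by (cases C)
  ultimately have N: "N = Mu (Cmd a0 N1)" "M = lift_n (Suc k) N1" "a = lift_idx (Suc k) a0"
    using sd_Mu.hyps(4) by (auto simp: lift_idx_def)
  have "sd_typ G N1 (TArr k') (case_nat k'' D \<circ> lift_idx (Suc k))"
    and "sub_c ((case_nat k'' D \<circ> lift_idx (Suc k)) a0) k'"
    using sd_Mu.hyps(2)[OF N(2)] sd_Mu.hyps(3) N(3) by auto
  then show ?case unfolding N(1) case_nat_comp_lift_idx by (rule sd_typ.sd_Mu)
next
  case (sd_Int G M t1 D t2)
  then show ?case by (auto intro: sd_typ.sd_Int)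
qed

lemma sd_typ_lift_t0D: "sd_typ (cons_ctx s G) (lift_t 0 N) t D \<Longrightarrow> sd_typ G N t D"
  by (drule sd_typ_lift_tD) (simp add: comp_def lift_idx_def)

lemma sd_typ_lift_n0D: "sd_typ G (lift_n 0 N) t (case_nat k D) \<Longrightarrow> sd_typ G N t D"
  by (drule sd_typ_lift_nD) (simp add: comp_def lift_idx_def)

section \<open>Subject expansion\<close>

text \<open>A list of types of \<open>N\<close> rather than a single one: the list is empty when the substituted
  variable or name does not occur.\<close>

definition holds_below_types :: "basis \<Rightarrow> trm \<Rightarrow> (nat \<Rightarrow> ctype) \<Rightarrow> (ttype \<Rightarrow> bool) \<Rightarrow> bool" where
  "holds_below_types G N D \<Phi> \<longleftrightarrow>
     (\<exists>S. list_all (\<lambda>s. sd_typ G N s D) S \<and> (\<forall>\<sigma>. list_all (sub_t \<sigma>) S \<longrightarrow> \<Phi> \<sigma>))"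

lemma holds_below_types_const: "(\<And>\<sigma>. \<Phi> \<sigma>) \<Longrightarrow> holds_below_types G N D \<Phi>"
  unfolding holds_below_types_def by (intro exI[of _ "[]"]) simp

lemma holds_below_types_type: "sd_typ G N s D \<Longrightarrow> holds_below_types G N D (\<lambda>\<sigma>. sub_t \<sigma> s)"
  unfolding holds_below_types_def by (intro exI[of _ "[s]"]) simp

lemma holds_below_types_conj:
  assumes "holds_below_types G N D \<Phi>" "holds_below_types G N D \<Psi>"
    and "\<And>\<sigma>. \<Phi> \<sigma> \<Longrightarrow> \<Psi> \<sigma> \<Longrightarrow> \<chi> \<sigma>"
  shows "holds_below_types G N D \<chi>"
proof -
  obtain S1 S2 where "list_all (\<lambda>s. sd_typ G N s D) S1" "\<forall>\<sigma>. list_all (sub_t \<sigma>) S1 \<longrightarrow> \<Phi> \<sigma>"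
    and "list_all (\<lambda>s. sd_typ G N s D) S2" "\<forall>\<sigma>. list_all (sub_t \<sigma>) S2 \<longrightarrow> \<Psi> \<sigma>"
    using assms(1,2) unfolding holds_below_types_def by blast
  then show ?thesis
    unfolding holds_below_types_def by (intro exI[of _ "S1 @ S2"]) (simp add: assms(3))
qed

lemma holds_below_types_mono:
  assumes "holds_below_types G N D \<Phi>"
    and "\<And>s. sd_typ G N s D \<Longrightarrow> sd_typ G' N' s D'" and "\<And>\<sigma>. \<Phi> \<sigma> \<Longrightarrow> \<Psi> \<sigma>"
  shows "holds_below_types G' N' D' \<Psi>"
  using assms unfolding holds_below_types_def by (metis list.pred_mono_strong)

lemma holds_below_types_from_arrows:
  assumes "sd_typ G M t D"
    and "\<And>k. sd_typ G M (TArr k) D \<Longrightarrow>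
      holds_below_types G' N D' (\<lambda>\<sigma>. sd_typ (\<Gamma> \<sigma>) M' (TArr k) (\<Delta> \<sigma>))"
  shows "holds_below_types G' N D' (\<lambda>\<sigma>. sd_typ (\<Gamma> \<sigma>) M' t (\<Delta> \<sigma>))"
  using assms by (rule sd_typ_from_arrows) (auto elim: holds_below_types_conj intro: sd_Int)

lemma sd_typ_foldr_TInt:
  "sd_typ G N s0 D \<Longrightarrow> list_all (\<lambda>s. sd_typ G N s D) S \<Longrightarrow> sd_typ G N (foldr TInt S s0) D"
  by (induction S) (auto intro: sd_Int)

lemma foldr_TInt_below: "list_all (sub_t (foldr TInt S s0)) S"
  by (induction S) (auto intro: t_inter1 elim!: list.pred_mono_strong intro: t_trans[OF t_inter2])

lemma holds_below_typesE:
  assumes "holds_below_types G N D \<Phi>" and "sd_typ G N s0 D"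
  obtains \<sigma> where "sd_typ G N \<sigma> D" and "\<Phi> \<sigma>"
proof -
  obtain S where "list_all (\<lambda>s. sd_typ G N s D) S" "\<forall>\<sigma>. list_all (sub_t \<sigma>) S \<longrightarrow> \<Phi> \<sigma>"
    using assms(1) unfolding holds_below_types_def by blast
  with assms(2) show ?thesis
    using that sd_typ_foldr_TInt foldr_TInt_below by blast
qed

lemma holds_below_types_Lam:
  assumes "sd_typ G (Lam X) t D"
    and "\<And>s k. sd_typ (cons_ctx s G) X (TArr k) D \<Longrightarrow> holds_below_types (cons_ctx s G) (lift_t 0 N) D
      (\<lambda>\<sigma>. sd_typ (cons_ctx s (\<Gamma> \<sigma>)) B (TArr k) (\<Delta> \<sigma>))"
  shows "holds_below_types G N D (\<lambda>\<sigma>. sd_typ (\<Gamma> \<sigma>) (Lam B) t (\<Delta> \<sigma>))"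
  using assms(1)
proof (rule holds_below_types_from_arrows)
  fix k assume "sd_typ G (Lam X) (TArr k) D"
  then obtain s k0 where k: "k = Prod s k0" and "sd_typ (cons_ctx s G) X (TArr k0) D"
    by (rule sd_typ_LamE)
  from assms(2)[OF this(2)]
  show "holds_below_types G N D (\<lambda>\<sigma>. sd_typ (\<Gamma> \<sigma>) (Lam B) (TArr k) (\<Delta> \<sigma>))"
    by (rule holds_below_types_mono) (auto simp: k intro: sd_typ_lift_t0D sd_Abs)
qed

lemma holds_below_types_App:
  assumes "sd_typ G (App X1 X2) t D"
    and "\<And>t. sd_typ G X1 t D \<Longrightarrow> holds_below_types G N D (\<lambda>\<sigma>. sd_typ (\<Gamma> \<sigma>) B1 t (\<Delta> \<sigma>))"
    and "\<And>t. sd_typ G X2 t D \<Longrightarrow> holds_below_types G N D (\<lambda>\<sigma>. sd_typ (\<Gamma> \<sigma>) B2 t (\<Delta> \<sigma>))"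
  shows "holds_below_types G N D (\<lambda>\<sigma>. sd_typ (\<Gamma> \<sigma>) (App B1 B2) t (\<Delta> \<sigma>))"
  using assms(1)
proof (rule holds_below_types_from_arrows)
  fix k assume "sd_typ G (App X1 X2) (TArr k) D"
  then obtain s where "sd_typ G X1 (TArr (Prod s k)) D" and "sd_typ G X2 s D"
    by (rule sd_typ_AppE)
  from assms(2)[OF this(1)] assms(3)[OF this(2)]
  show "holds_below_types G N D (\<lambda>\<sigma>. sd_typ (\<Gamma> \<sigma>) (App B1 B2) (TArr k) (\<Delta> \<sigma>))"
    by (rule holds_below_types_conj) (rule sd_App)
qed

lemma holds_below_types_Mu:
  assumes "sd_typ G (Mu (Cmd a X)) t D"
    and "\<And>k k'. sd_typ G X (TArr k') (case_nat k D) \<Longrightarrow>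
      holds_below_types G (lift_n 0 N) (case_nat k D) (\<lambda>\<sigma>. sd_typ (\<Gamma> \<sigma>) B (TArr k') (case_nat k D))"
  shows "holds_below_types G N D (\<lambda>\<sigma>. sd_typ (\<Gamma> \<sigma>) (Mu (Cmd a B)) t D)"
  using assms(1)
proof (rule holds_below_types_from_arrows)
  fix k assume "sd_typ G (Mu (Cmd a X)) (TArr k) D"
  then obtain k' where "sd_typ G X (TArr k') (case_nat k D)" and below: "sub_c (case_nat k D a) k'"
    by (auto elim: sd_typ_MuE)
  from assms(2)[OF this(1)]
  show "holds_below_types G N D (\<lambda>\<sigma>. sd_typ (\<Gamma> \<sigma>) (Mu (Cmd a B)) (TArr k) D)"
    by (rule holds_below_types_mono) (auto intro: sd_typ_lift_n0D sd_Mu[OF _ below])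
qed

definition basis_insert :: "nat \<Rightarrow> ttype \<Rightarrow> basis \<Rightarrow> basis" where
  "basis_insert k s G = (\<lambda>n. if n < k then G n else if n = k then Some s else G (n - 1))"

lemma basis_insert_0: "basis_insert 0 s G = cons_ctx s G"
  by (rule ext) (simp add: basis_insert_def cons_ctx_def split: nat.split)

lemma basis_insert_Suc_cons_ctx:
  "basis_insert (Suc k) s (cons_ctx s' G) = cons_ctx s' (basis_insert k s G)"
  by (rule ext) (simp add: basis_insert_def cons_ctx_def split: nat.split)

lemma sd_typ_subst_inverse:
  "sd_typ G (subst M k N) t D \<Longrightarrow>
    holds_below_types G N D (\<lambda>\<sigma>. sd_typ (basis_insert k \<sigma> G) M t D)"
proof (induction M arbitrary: G D t k N rule: measure_induct_rule[of size])
  case (less M)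
  show ?case
  proof (cases M)
    case (Var i)
    then show ?thesis
    proof (cases "i = k")
      case True
      with less.prems Var have "sd_typ G N t D" by simp
      then show ?thesis
        by (rule holds_below_types_mono[OF holds_below_types_type])
          (auto simp: Var True sd_typ_Var_iff basis_insert_def)
    next
      case False
      then show ?thesis using less.prems Var
        by (intro holds_below_types_const) (auto simp: sd_typ_Var_iff basis_insert_def)
    qed
  next
    case (Lam B)
    have "sd_typ G (Lam (subst B (Suc k) (lift_t 0 N))) t D" using less.prems Lam by simp
    then show ?thesis unfolding Lam
    proof (rule holds_below_types_Lam)
      fix s k' assume "sd_typ (cons_ctx s G) (subst B (Suc k) (lift_t 0 N)) (TArr k') D"
      with less.IH[of B] show "holds_below_types (cons_ctx s G) (lift_t 0 N) D
          (\<lambda>\<sigma>. sd_typ (cons_ctx s (basis_insert k \<sigma> G)) B (TArr k') D)"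
        by (simp add: Lam flip: basis_insert_Suc_cons_ctx)
    qed
  next
    case (App B1 B2)
    have "sd_typ G (App (subst B1 k N) (subst B2 k N)) t D" using less.prems App by simp
    then show ?thesis unfolding App
      by (rule holds_below_types_App) (use less.IH App in simp)+
  next
    case (Mu C)
    obtain a B where C: "C = Cmd a B" by (cases C)
    have "sd_typ G (Mu (Cmd a (subst B k (lift_n 0 N)))) t D" using less.prems Mu C by simp
    then show ?thesis unfolding Mu C
      by (rule holds_below_types_Mu) (use less.IH Mu C in simp)
  qed
qed

lemma case_nat_upd_Suc: "(case_nat k D)(Suc b := x) = case_nat k (D(b := x))"
  by (rule ext) (simp split: nat.split)

lemma case_nat_upd_0: "(case_nat k D)(0 := x) = case_nat x D"
  by (rule ext) (simp split: nat.split)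

lemma sd_typ_ssubst_Mu_inverse:
  fixes k :: ctype and D :: "nat \<Rightarrow> ctype" and c :: nat and E :: "ttype \<Rightarrow> nat \<Rightarrow> ctype"
  defines "E \<sigma> \<equiv> (case_nat k D)(c := Prod \<sigma> (case_nat k D c))"
  assumes inverse_B: "\<And>t. sd_typ G (ssubst B c (lift_n 0 N)) t (case_nat k D) \<Longrightarrow>
      holds_below_types G (lift_n 0 N) (case_nat k D) (\<lambda>\<sigma>. sd_typ G B t (E \<sigma>))"
    and typing: "sd_typ G (Mu (ssubst_c (Cmd a B) c (lift_n 0 N))) (TArr k) D"
  shows "holds_below_types G N D (\<lambda>\<sigma>. \<exists>k'. sd_typ G B (TArr k') (E \<sigma>) \<and> sub_c (E \<sigma> a) k')"
proof (cases "a = c")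
  case True
  with typing obtain k' where app:
    "sd_typ G (App (ssubst B c (lift_n 0 N)) (lift_n 0 N)) (TArr k') (case_nat k D)"
    and below: "sub_c (case_nat k D a) k'"
    by (auto elim: sd_typ_MuE)
  from app obtain s where head: "sd_typ G (ssubst B c (lift_n 0 N)) (TArr (Prod s k')) (case_nat k D)"
    and arg: "sd_typ G (lift_n 0 N) s (case_nat k D)"
    by (rule sd_typ_AppE)
  have "holds_below_types G (lift_n 0 N) (case_nat k D)
      (\<lambda>\<sigma>. sd_typ G B (TArr (Prod s k')) (E \<sigma>) \<and> sub_t \<sigma> s)"
    using inverse_B[OF head] holds_below_types_type[OF arg] by (rule holds_below_types_conj) simp
  then show ?thesis
    by (rule holds_below_types_mono)
      (use True below in \<open>auto simp: E_def intro: sd_typ_lift_n0D c_prod\<close>)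
next
  case False
  with typing obtain k' where body: "sd_typ G (ssubst B c (lift_n 0 N)) (TArr k') (case_nat k D)"
    and below: "sub_c (case_nat k D a) k'"
    by (auto elim: sd_typ_MuE)
  from inverse_B[OF body] show ?thesis
    by (rule holds_below_types_mono) (use False below in \<open>auto simp: E_def intro: sd_typ_lift_n0D\<close>)
qed

lemma sd_typ_ssubst_inverse:
  "sd_typ G (ssubst M b N) t D \<Longrightarrow>
    holds_below_types G N D (\<lambda>\<sigma>. sd_typ G M t (D(b := Prod \<sigma> (D b))))"
proof (induction M arbitrary: G D t b N rule: measure_induct_rule[of size])
  case (less M)
  let ?\<Delta> = "\<lambda>\<sigma>. D(b := Prod \<sigma> (D b))"
  show ?case
  proof (cases M)
    case (Var i)
    then show ?thesis using less.prems
      by (intro holds_below_types_const) (simp add: sd_typ_Var_iff)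
  next
    case (Lam B)
    have "sd_typ G (Lam (ssubst B b (lift_t 0 N))) t D" using less.prems Lam by simp
    then show ?thesis unfolding Lam
      by (rule holds_below_types_Lam) (use less.IH Lam in \<open>simp add: fun_upd_def\<close>)
  next
    case (App B1 B2)
    have "sd_typ G (App (ssubst B1 b N) (ssubst B2 b N)) t D" using less.prems App by simp
    then show ?thesis unfolding App
      by (rule holds_below_types_App) (use less.IH App in \<open>simp add: fun_upd_def\<close>)+
  next
    case (Mu C)
    obtain a B where C: "C = Cmd a B" by (cases C)
    have "sd_typ G (Mu (ssubst_c (Cmd a B) (Suc b) (lift_n 0 N))) t D" using less.prems Mu C by simp
    then show ?thesis
    proof (rule holds_below_types_from_arrows[where \<Gamma> = "\<lambda>_. G" and \<Delta> = ?\<Delta>])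
      fix kk assume typing: "sd_typ G (Mu (ssubst_c (Cmd a B) (Suc b) (lift_n 0 N))) (TArr kk) D"
      have "holds_below_types G (lift_n 0 N) (case_nat kk D)
          (\<lambda>\<sigma>. sd_typ G B t' ((case_nat kk D)(Suc b := Prod \<sigma> (case_nat kk D (Suc b)))))"
        if "sd_typ G (ssubst B (Suc b) (lift_n 0 N)) t' (case_nat kk D)" for t'
        using less.IH[of B G "Suc b" "lift_n 0 N" t' "case_nat kk D"] Mu C that
        by (simp add: fun_upd_def)
      from sd_typ_ssubst_Mu_inverse[OF this typing]
      have "holds_below_types G N D (\<lambda>\<sigma>. \<exists>k'. sd_typ G B (TArr k') (case_nat kk (?\<Delta> \<sigma>))
          \<and> sub_c (case_nat kk (?\<Delta> \<sigma>) a) k')"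
        by (simp add: case_nat_upd_Suc)
      then show "holds_below_types G N D (\<lambda>\<sigma>. sd_typ G M (TArr kk) (?\<Delta> \<sigma>))"
        by (rule holds_below_types_mono) (auto simp: Mu C intro: sd_Mu)
    qed
  qed
qed

lemma sd_typ_beta_expand:
  assumes "sd_typ G N s D" and "sd_typ G (subst B 0 N) t D"
  shows "sd_typ G (App (Lam B) N) t D"
  using assms(2)
proof (rule sd_typ_from_arrows)
  fix k assume "sd_typ G (subst B 0 N) (TArr k) D"
  then have "holds_below_types G N D (\<lambda>\<sigma>. sd_typ (cons_ctx \<sigma> G) B (TArr k) D)"
    using sd_typ_subst_inverse by (fastforce simp: basis_insert_0)
  then obtain \<sigma> where "sd_typ G N \<sigma> D" and "sd_typ (cons_ctx \<sigma> G) B (TArr k) D"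
    using assms(1) by (rule holds_below_typesE)
  then show "sd_typ G (App (Lam B) N) (TArr k) D" by (blast intro: sd_App sd_Abs)
qed (rule sd_Int)

lemma sd_typ_mu_expand:
  assumes "sd_typ G N s D" and "sd_typ G (Mu (ssubst_c C 0 (lift_n 0 N))) t D"
  shows "sd_typ G (App (Mu C) N) t D"
  using assms(2)
proof (rule sd_typ_from_arrows)
  fix k assume typing: "sd_typ G (Mu (ssubst_c C 0 (lift_n 0 N))) (TArr k) D"
  obtain a B where C: "C = Cmd a B" by (cases C)
  have "holds_below_types G N D (\<lambda>\<sigma>. \<exists>k'. sd_typ G B (TArr k') (case_nat (Prod \<sigma> k) D)
      \<and> sub_c (case_nat (Prod \<sigma> k) D a) k')"
    using sd_typ_ssubst_Mu_inverse[where c = 0, OF sd_typ_ssubst_inverse typing[unfolded C]]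
    by (simp add: case_nat_upd_0)
  then obtain \<sigma> where "sd_typ G N \<sigma> D" and "sd_typ G (Mu C) (TArr (Prod \<sigma> k)) D"
    using assms(1) by (rule holds_below_typesE) (auto simp: C intro: sd_Mu)
  then show "sd_typ G (App (Mu C) N) (TArr k) D" by (blast intro: sd_App)
qed (rule sd_Int)

lemma sd_typ_foldl_App:
  "list_all2 (\<lambda>P s. sd_typ G P s D) Ps ss \<Longrightarrow> sd_typ G H (TArr (foldr Prod ss k)) D \<Longrightarrow>
    sd_typ G (foldl App H Ps) (TArr k) D"
  by (induction Ps ss arbitrary: H rule: list_all2_induct) (auto intro: sd_App)

lemma sd_typ_foldl_App_replace_head:
  assumes "\<And>t. sd_typ G A t D \<Longrightarrow> sd_typ G A' t D"
  shows "sd_typ G (foldl App A Ps) t D \<Longrightarrow> sd_typ G (foldl App A' Ps) t D"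
  using assms
proof (induction Ps arbitrary: A A' t)
  case Nil
  then show ?case by simp
next
  case (Cons P Ps)
  have "sd_typ G (App A' P) t D" if "sd_typ G (App A P) t D" for t
    using that
  proof (rule sd_typ_from_arrows)
    show "sd_typ G (App A' P) (TArr k) D" if "sd_typ G (App A P) (TArr k) D" for k
      using that by (rule sd_typ_AppE) (blast intro: sd_App Cons.prems(2))
  qed (rule sd_Int)
  then show ?case using Cons by simp
qed

section \<open>Typability of strongly normalising terms\<close>

definition sd_typable :: "trm \<Rightarrow> bool" where
  "sd_typable M \<longleftrightarrow>
     (\<exists>G D t. finite (dom G) \<and> finite {a. D a \<noteq> Omega} \<and> sd_typ G M t D)"

definition basis_meet :: "basis \<Rightarrow> basis \<Rightarrow> basis" where
  "basis_meet G1 G2 x = (case (G1 x, G2 x) of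
     (Some s1, Some s2) \<Rightarrow> Some (TInt s1 s2) | (Some s1, None) \<Rightarrow> Some s1 | (None, s2) \<Rightarrow> s2)"

text \<open>Meeting with \<open>Omega\<close> is avoided so that the set of names not mapped to \<open>Omega\<close> stays finite.\<close>

definition ctx_meet :: "(nat \<Rightarrow> ctype) \<Rightarrow> (nat \<Rightarrow> ctype) \<Rightarrow> nat \<Rightarrow> ctype" where
  "ctx_meet D1 D2 a = (if D1 a = Omega then D2 a else if D2 a = Omega then D1 a else CInt (D1 a) (D2 a))"

lemma dom_basis_meet: "dom (basis_meet G1 G2) = dom G1 \<union> dom G2"
  by (auto simp: basis_meet_def split: option.splits)

lemma basis_le_basis_meet: "basis_le (basis_meet G1 G2) G1" "basis_le (basis_meet G1 G2) G2"
  unfolding basis_le_def basis_meet_def by (auto split: option.splits intro: t_refl t_inter1 t_inter2)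

lemma ctx_meet_support: "{a. ctx_meet D1 D2 a \<noteq> Omega} = {a. D1 a \<noteq> Omega} \<union> {a. D2 a \<noteq> Omega}"
  by (auto simp: ctx_meet_def)

lemma sub_c_ctx_meet: "sub_c (ctx_meet D1 D2 a) (D1 a)" "sub_c (ctx_meet D1 D2 a) (D2 a)"
  by (auto simp: ctx_meet_def intro: c_refl c_omega c_inter1 c_inter2)

lemma sd_typ_common_ctx:
  assumes "finite (dom G1)" "finite {a. D1 a \<noteq> Omega}" "finite (dom G2)" "finite {a. D2 a \<noteq> Omega}"
  obtains G D where "finite (dom G)" "finite {a. D a \<noteq> Omega}"
    and "\<And>M t. sd_typ G1 M t D1 \<Longrightarrow> sd_typ G M t D"
    and "\<And>M t. sd_typ G2 M t D2 \<Longrightarrow> sd_typ G M t D"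
proof
  show "finite (dom (basis_meet G1 G2))" "finite {a. ctx_meet D1 D2 a \<noteq> Omega}"
    using assms by (simp_all add: dom_basis_meet ctx_meet_support)
  show "sd_typ (basis_meet G1 G2) M t (ctx_meet D1 D2)" if "sd_typ G1 M t D1" for M t
    using that basis_le_basis_meet(1) sub_c_ctx_meet(1) by (rule sd_typ_mono)
  show "sd_typ (basis_meet G1 G2) M t (ctx_meet D1 D2)" if "sd_typ G2 M t D2" for M t
    using that basis_le_basis_meet(2) sub_c_ctx_meet(2) by (rule sd_typ_mono)
qed

lemma sd_typable_list:
  "\<forall>P\<in>set Ps. sd_typable P \<Longrightarrow> \<exists>G D ss. finite (dom G) \<and> finite {a. D a \<noteq> Omega} \<and>
     list_all2 (\<lambda>P s. sd_typ G P s D) Ps ss"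
proof (induction Ps)
  case Nil
  show ?case by (intro exI[of _ Map.empty] exI[of _ "\<lambda>_. Omega"] exI[of _ "[]"]) simp
next
  case (Cons P Ps)
  obtain G1 D1 ss where 1: "finite (dom G1)" "finite {a. D1 a \<noteq> Omega}"
    "list_all2 (\<lambda>P s. sd_typ G1 P s D1) Ps ss"
    using Cons by auto
  obtain G2 D2 t where 2: "finite (dom G2)" "finite {a. D2 a \<noteq> Omega}" "sd_typ G2 P t D2"
    using Cons.prems unfolding sd_typable_def by auto
  obtain G D where "finite (dom G)" "finite {a. D a \<noteq> Omega}"
    and "\<And>M t. sd_typ G1 M t D1 \<Longrightarrow> sd_typ G M t D" "\<And>M t. sd_typ G2 M t D2 \<Longrightarrow> sd_typ G M t D"
    using 1(1,2) 2(1,2) by (rule sd_typ_common_ctx) auto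
  with 1(3) 2(3) show ?case
    by (intro exI[of _ G] exI[of _ D] exI[of _ "t # ss"]) (auto elim: list_all2_mono)
qed

lemma sd_typable_foldl_Var: "\<forall>P\<in>set Ps. sd_typable P \<Longrightarrow> sd_typable (foldl App (Var x) Ps)"
proof -
  assume "\<forall>P\<in>set Ps. sd_typable P"
  then obtain G D ss where G: "finite (dom G)" and D: "finite {a. D a \<noteq> Omega}"
    and args: "list_all2 (\<lambda>P s. sd_typ G P s D) Ps ss"
    using sd_typable_list by blast
  define s where "s = TArr (foldr Prod ss Omega)"
  define G' where "G' = G(x := Some (case G x of None \<Rightarrow> s | Some s' \<Rightarrow> TInt s' s))"
  have "basis_le G' G"
    unfolding basis_le_def G'_def by (auto intro: t_refl t_inter1)
  then have "list_all2 (\<lambda>P s. sd_typ G' P s D) Ps ss"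
    using args by (auto elim!: list_all2_mono intro: sd_typ_mono c_refl)
  moreover have "sd_typ G' (Var x) s D"
    by (auto simp: sd_typ_Var_iff G'_def split: option.split intro: t_refl t_inter2)
  ultimately have "sd_typ G' (foldl App (Var x) Ps) (TArr Omega) D"
    unfolding s_def by (rule sd_typ_foldl_App)
  moreover have "finite (dom G')" using G by (simp add: G'_def)
  ultimately show ?thesis using D unfolding sd_typable_def by blast
qed

lemma sd_typable_Lam: "sd_typable B \<Longrightarrow> sd_typable (Lam B)"
proof -
  assume "sd_typable B"
  then obtain G D t where G: "finite (dom G)" and D: "finite {a. D a \<noteq> Omega}"
    and "sd_typ G B t D"
    unfolding sd_typable_def by blast
  then obtain k where B: "sd_typ G B (TArr k) D" using sd_typ_arrow by blast
  define s where "s = (case G 0 of None \<Rightarrow> TArr Omega | Some s \<Rightarrow> s)"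
  have "basis_le (cons_ctx s (G \<circ> Suc)) G"
    unfolding basis_le_def s_def by (auto simp: cons_ctx_def split: nat.split intro: t_refl)
  with B have "sd_typ (cons_ctx s (G \<circ> Suc)) B (TArr k) D" by (blast intro: sd_typ_mono c_refl)
  then have "sd_typ (G \<circ> Suc) (Lam B) (TArr (Prod s k)) D" by (rule sd_Abs)
  moreover have "dom (G \<circ> Suc) = Suc -` dom G" by auto
  then have "finite (dom (G \<circ> Suc))" using G by (simp add: finite_vimageI)
  ultimately show ?thesis using D unfolding sd_typable_def by blast
qed

lemma sd_typable_Mu: "sd_typable B \<Longrightarrow> sd_typable (Mu (Cmd a B))"
proof -
  assume "sd_typable B"
  then obtain G D t where G: "finite (dom G)" and D: "finite {a. D a \<noteq> Omega}"
    and "sd_typ G B t D"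
    unfolding sd_typable_def by blast
  then obtain k where "sd_typ G B (TArr k) D" using sd_typ_arrow by blast
  define D' where "D' = D(a := CInt k (D a))"
  have D': "case_nat (D' 0) (D' \<circ> Suc) = D'"
    by (rule ext) (simp split: nat.split)
  have "sub_c (D' b) (D b)" for b
    unfolding D'_def by (auto intro: c_refl c_inter2)
  with \<open>sd_typ G B (TArr k) D\<close> have "sd_typ G B (TArr k) (case_nat (D' 0) (D' \<circ> Suc))"
    unfolding D' by (blast intro: sd_typ_mono basis_le_refl)
  moreover have "sub_c (case_nat (D' 0) (D' \<circ> Suc) a) k"
    unfolding D' by (simp add: D'_def c_inter1)
  ultimately have "sd_typ G (Mu (Cmd a B)) (TArr (D' 0)) (D' \<circ> Suc)" by (rule sd_Mu)
  moreover have "{n. (D' \<circ> Suc) n \<noteq> Omega} \<subseteq> Suc -` insert a {n. D n \<noteq> Omega}"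
    by (auto simp: D'_def)
  then have "finite {n. (D' \<circ> Suc) n \<noteq> Omega}"
    using D by (meson finite_insert finite_subset finite_vimageI inj_Suc)
  ultimately show ?thesis using G unfolding sd_typable_def by blast
qed

lemma sd_typable_foldl_App_expand:
  assumes "sd_typable (foldl App R Ps)" and "sd_typable N"
    and expand: "\<And>G D s t. sd_typ G N s D \<Longrightarrow> sd_typ G R t D \<Longrightarrow> sd_typ G X t D"
  shows "sd_typable (foldl App X Ps)"
proof -
  obtain G1 D1 t where 1: "finite (dom G1)" "finite {a. D1 a \<noteq> Omega}"
    "sd_typ G1 (foldl App R Ps) t D1"
    using assms(1) unfolding sd_typable_def by blast
  obtain G2 D2 s where 2: "finite (dom G2)" "finite {a. D2 a \<noteq> Omega}" "sd_typ G2 N s D2"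
    using assms(2) unfolding sd_typable_def by blast
  obtain G D where "finite (dom G)" "finite {a. D a \<noteq> Omega}"
    and "sd_typ G (foldl App R Ps) t D" "sd_typ G N s D"
    using sd_typ_common_ctx[OF 1(1,2) 2(1,2)] 1(3) 2(3) by metis
  then show ?thesis
    unfolding sd_typable_def by (blast intro: sd_typ_foldl_App_replace_head expand)
qed

lemma typ_t_if_sd_typable:
  assumes "sd_typable M"
  shows "\<exists>(G::basis) (D::namectx) d. finite (dom G) \<and> finite (dom D) \<and> typ_t G M d D"
proof -
  obtain G D t where "finite (dom G)" "finite {a. D a \<noteq> Omega}" "sd_typ G M t D"
    using assms unfolding sd_typable_def by blast
  moreover define D' where "D' a = (if D a = Omega then None else Some (D a))" for a
  moreover have "dget D' = D" by (rule ext) (simp add: dget_def D'_def)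
  ultimately show ?thesis
    by (intro exI[of _ G] exI[of _ D'] exI[of _ t])
      (auto simp: dom_def D'_def intro: sd_typ_sound c_refl)
qed

definition subterm1 :: "trm \<Rightarrow> trm \<Rightarrow> bool" where
  "subterm1 N M \<longleftrightarrow>
     M = Lam N \<or> (\<exists>P. M = App N P) \<or> (\<exists>P. M = App P N) \<or> (\<exists>a. M = Mu (Cmd a N))"

lemma subterm1_size: "subterm1 N M \<Longrightarrow> size N < size M"
  unfolding subterm1_def by auto

lemma tranclp_subterm1_size: "subterm1\<^sup>+\<^sup>+ N M \<Longrightarrow> size N < size M"
  by (induction rule: tranclp_induct) (auto dest: subterm1_size)

lemma subterm1_red_t_commute: "subterm1 N M \<Longrightarrow> red_t N N' \<Longrightarrow> \<exists>M'. red_t M M' \<and> subterm1 N' M'"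
  unfolding subterm1_def by (auto intro: red_t_red_c.intros)

lemma tranclp_subterm1_red_t_commute:
  "subterm1\<^sup>+\<^sup>+ N M \<Longrightarrow> red_t N N' \<Longrightarrow> \<exists>M'. red_t M M' \<and> subterm1\<^sup>+\<^sup>+ N' M'"
proof (induction arbitrary: N' rule: tranclp_induct)
  case (base M)
  then obtain M' where "red_t M M'" "subterm1 N' M'" using subterm1_red_t_commute by blast
  then show ?case by blast
next
  case (step L M)
  then obtain L' where "red_t L L'" "subterm1\<^sup>+\<^sup>+ N' L'" by blast
  moreover obtain M' where "red_t M M'" "subterm1 L' M'"
    using subterm1_red_t_commute step.hyps(2) \<open>red_t L L'\<close> by blast
  ultimately show ?case by (blast intro: tranclp.trancl_into_trancl)
qed

definition red_or_subterm :: "trm \<Rightarrow> trm \<Rightarrow> bool" where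
  "red_or_subterm N M \<longleftrightarrow> red_t M N \<or> subterm1\<^sup>+\<^sup>+ N M"

lemma accp_red_or_subterm:
  "Wellfounded.accp red_t\<inverse>\<inverse> M \<Longrightarrow> subterm1\<^sup>*\<^sup>* N M \<Longrightarrow> Wellfounded.accp red_or_subterm N"
proof (induction arbitrary: N rule: accp_induct_rule)
  case (1 M)
  show ?case using "1.prems"
  proof (induction N rule: measure_induct_rule[of size])
    case (less N)
    show ?case
    proof (rule accpI)
      fix L assume "red_or_subterm L N"
      then consider "red_t N L" | "subterm1\<^sup>+\<^sup>+ L N" unfolding red_or_subterm_def by blast
      then show "Wellfounded.accp red_or_subterm L"
      proof cases
        case red: 1
        from less.prems consider "N = M" | "subterm1\<^sup>+\<^sup>+ N M" by (blast dest: rtranclpD)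
        then obtain M' where "red_t M M'" "subterm1\<^sup>*\<^sup>* L M'"
        proof cases
          case 1
          with red show thesis using that by blast
        next
          case 2
          with red show thesis
            using that tranclp_subterm1_red_t_commute by (blast dest: tranclp_into_rtranclp)
        qed
        then show ?thesis by (blast intro: "1.IH")
      next
        case 2
        with less.prems have "subterm1\<^sup>*\<^sup>* L M"
          by (blast dest: tranclp_into_rtranclp intro: rtranclp_trans)
        with 2 show ?thesis by (blast intro: less.IH tranclp_subterm1_size)
      qed
    qed
  qed
qed

lemma accp_if_SN:
  assumes "SN M"
  shows "Wellfounded.accp red_t\<inverse>\<inverse> M"
proof (rule ccontr)
  let ?P = "\<lambda>n N. \<not> Wellfounded.accp red_t\<inverse>\<inverse> N \<and> (n = 0 \<longrightarrow> N = M)"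
  assume "\<not> Wellfounded.accp red_t\<inverse>\<inverse> M"
  then have "\<exists>f. \<forall>n. ?P n (f n) \<and> red_t (f n) (f (Suc n))"
  proof (intro dependent_nat_choice)
    show "\<exists>N'. ?P (Suc n) N' \<and> red_t N N'" if "?P n N" for n N
      using that by (blast elim: not_accp_down)
  qed blast
  with assms show False unfolding SN_def by blast
qed

lemma foldl_App_red_t: "red_t A B \<Longrightarrow> red_t (foldl App A Ps) (foldl App B Ps)"
  by (induction Ps arbitrary: A B) (auto intro: appL)

lemma rtranclp_subterm1_foldl_App_head: "subterm1\<^sup>*\<^sup>* H (foldl App H Ps)"
proof (induction Ps arbitrary: H)
  case (Cons P Ps)
  have "subterm1 H (App H P)" by (simp add: subterm1_def)
  with Cons.IH[of "App H P"] show ?case by (simp add: converse_rtranclp_into_rtranclp)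
qed simp

lemma tranclp_subterm1_foldl_App_arg: "P \<in> set Ps \<Longrightarrow> subterm1\<^sup>+\<^sup>+ P (foldl App H Ps)"
proof (induction Ps arbitrary: H)
  case (Cons Q Qs)
  show ?case
  proof (cases "P = Q")
    case True
    have "subterm1 Q (App H Q)" by (simp add: subterm1_def)
    then show ?thesis using True rtranclp_subterm1_foldl_App_head[of "App H Q" Qs]
      by (simp add: tranclp_rtranclp_tranclp)
  next
    case False
    then show ?thesis using Cons by simp
  qed
qed simp

lemma foldl_App_head_decomp: "\<exists>h Ps. M = foldl App h Ps \<and> (\<forall>A B. h \<noteq> App A B)"
proof (induction M rule: measure_induct_rule[of size])
  case (less M)
  show ?case
  proof (cases M)
    case (App A B)
    then obtain h Ps where "A = foldl App h Ps" "\<forall>A B. h \<noteq> App A B" using less[of A] by auto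
    then show ?thesis using App by (intro exI[of _ h] exI[of _ "Ps @ [B]"]) simp
  qed (intro exI[of _ M] exI[of _ "[]"]; simp)+
qed

lemma sd_typable_if_accp: "Wellfounded.accp red_or_subterm M \<Longrightarrow> sd_typable M"
proof (induction rule: accp_induct_rule)
  case (1 M)
  obtain h Ps where M: "M = foldl App h Ps" and h: "\<forall>A B. h \<noteq> App A B"
    using foldl_App_head_decomp by blast
  have args: "\<forall>P\<in>set Ps. sd_typable P"
    using "1.IH" tranclp_subterm1_foldl_App_arg M unfolding red_or_subterm_def by blast
  show ?case
  proof (cases h)
    case (Var x)
    then show ?thesis using M args by (simp add: sd_typable_foldl_Var)
  next
    case (Lam B)
    show ?thesis
    proof (cases Ps)
      case Nil
      then show ?thesis using "1.IH" M Lam sd_typable_Lam unfolding red_or_subterm_def subterm1_def by auto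
    next
      case (Cons N Ps')
      have "red_t M (foldl App (subst B 0 N) Ps')"
        using M Lam Cons by (simp add: foldl_App_red_t beta)
      then have "sd_typable (foldl App (subst B 0 N) Ps')"
        using "1.IH" unfolding red_or_subterm_def by blast
      moreover have "sd_typable N" using args Cons by simp
      ultimately have "sd_typable (foldl App (App (Lam B) N) Ps')"
        by (rule sd_typable_foldl_App_expand) (rule sd_typ_beta_expand)
      then show ?thesis using M Lam Cons by simp
    qed
  next
    case (Mu C)
    obtain a B where C: "C = Cmd a B" by (cases C)
    show ?thesis
    proof (cases Ps)
      case Nil
      then show ?thesis using "1.IH" M Mu C sd_typable_Mu unfolding red_or_subterm_def subterm1_def by auto
    next
      case (Cons N Ps')
      have "red_t M (foldl App (Mu (ssubst_c C 0 (lift_n 0 N))) Ps')"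
        using M Mu Cons by (simp add: foldl_App_red_t mu)
      then have "sd_typable (foldl App (Mu (ssubst_c C 0 (lift_n 0 N))) Ps')"
        using "1.IH" unfolding red_or_subterm_def by blast
      moreover have "sd_typable N" using args Cons by simp
      ultimately have "sd_typable (foldl App (App (Mu C) N) Ps')"
        by (rule sd_typable_foldl_App_expand) (rule sd_typ_mu_expand)
      then show ?thesis using M Mu Cons by simp
    qed
  next
    case (App A B)
    then show ?thesis using h by blast
  qed
qed

theorem theorem6p21:
  assumes "SN M"
  shows "\<exists>(G::basis) (D::namectx) d. finite (dom G) \<and> finite (dom D) \<and> typ_t G M d D"
proof -
  have "Wellfounded.accp red_or_subterm M"
    using accp_if_SN[OF assms] by (rule accp_red_or_subterm) simp
  then show ?thesis by (intro typ_t_if_sd_typable sd_typable_if_accp)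
qed

end
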